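(* If $X$ and $X'$ are homotopy equivalent topological spaces, then $\mathrm{TC}_g(X)=\mathrm{TC}_g(X')$; that is, the generalized topological complexity depends only on the homotopy type of the space.
   Context: For a space $X$, let $X^I$ be the space of continuous paths $[0,1]\to X$ with the compact-open topology and $\pi_X:X^I\rightarrow X\times X$, $\pi_X(\alpha)=(\alpha(0),\alpha(1))$. The generalized topological complexity $\mathrm{TC}_g(X)$ is the least nonnegative integer $n$ such that $X\times X$ admits a cover by $n+1$ arbitrary (not necessarily open) subsets $A_0,\dots,A_n$ on each of which there exists a continuous local section $s_i:A_i\to X^I$ of $\pi_X$ (i.e. $\pi_X\circ s_i$ is the inclusion); $\mathrm{TC}_g(X)=\infty$ if no such $n$ exists. *)

theory Defs
  imports "HOL-Analysis.Analysis" "HOL-Library.FuncSet" "HOL-Library.Extended_Nat"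
begin

abbreviation unit_interval_top :: "real topology" where
  "unit_interval_top \<equiv> top_of_set {0..1}"

text \<open>Underlying set of the path space X^I: continuous maps [0,1] -> X,
  represented extensionally (value undefined outside [0,1]).\<close>
definition paths_of :: "'a topology \<Rightarrow> (real \<Rightarrow> 'a) set" where
  "paths_of X = {f. continuous_map unit_interval_top X f \<and> f \<in> extensional {0..1}}"

definition path_space :: "'a topology \<Rightarrow> (real \<Rightarrow> 'a) topology" where
  "path_space X = topology_generated_by
     {{f \<in> paths_of X. f ` K \<subseteq> U} | K U. compactin unit_interval_top K \<and> openin X U}"

definition endpoints :: "(real \<Rightarrow> 'a) \<Rightarrow> 'a \<times> 'a" where
  "endpoints \<alpha> = (\<alpha> 0, \<alpha> 1)"

definition has_local_section :: "'a topology \<Rightarrow> ('a \<times> 'a) set \<Rightarrow> bool" where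
  "has_local_section X A \<longleftrightarrow>
     (\<exists>s. continuous_map (subtopology (prod_topology X X) A) (path_space X) s \<and>
          (\<forall>a\<in>A. endpoints (s a) = a))"

definition tcg_cover :: "'a topology \<Rightarrow> nat \<Rightarrow> bool" where
  "tcg_cover X n \<longleftrightarrow>
     (\<exists>A :: nat \<Rightarrow> ('a \<times> 'a) set.
        (\<Union>i\<le>n. A i) = topspace X \<times> topspace X \<and>
        (\<forall>i\<le>n. has_local_section X (A i)))"

definition TC_g :: "'a topology \<Rightarrow> enat" where
  "TC_g X = (if \<exists>n. tcg_cover X n then enat (LEAST n. tcg_cover X n) else \<infinity>)"

end

(*
  By the exponential law for the compact-open topology on X^I, a continuous section of pi_X over
  A is the same thing as a homotopy between the two projections A -> X. If f : X -> Y and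
  g : Y -> X satisfy f o g ~ id, pull a cover A_0, ..., A_n of X x X back along g x g; on each
  pulled-back piece the projections are homotopic via fst ~ f g fst ~ f g snd ~ snd, the middle
  homotopy being f composed with the one on A_i. So TC_g Y <= TC_g X whenever Y is dominated
  by X, and a homotopy equivalence gives both inequalities.
*)
theory Submission
  imports Defs
begin

lemma topspace_path_space: "topspace (path_space X) = paths_of X"
proof -
  have "paths_of X \<in> {{f \<in> paths_of X. f ` K \<subseteq> U} | K U. compactin unit_interval_top K \<and> openin X U}"
    by (rule CollectI, rule exI[of _ "{}"], rule exI[of _ "topspace X"]) auto
  then show ?thesis
    unfolding path_space_def topology_generated_by_topspace by blast
qed

lemma continuous_map_path_space:
  "continuous_map T (path_space X) h \<longleftrightarrow>
     h \<in> topspace T \<rightarrow> paths_of X \<and>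
     (\<forall>K U. compact K \<and> K \<subseteq> {0..1} \<and> openin X U \<longrightarrow> openin T {x \<in> topspace T. h x ` K \<subseteq> U})"
proof -
  let ?S = "{{f \<in> paths_of X. f ` K \<subseteq> U} | K U. compactin unit_interval_top K \<and> openin X U}"
  have "\<Union> ?S = paths_of X"
    using topspace_path_space[of X] unfolding path_space_def topology_generated_by_topspace .
  moreover have "(\<forall>V\<in>?S. openin T (h -` V \<inter> topspace T)) \<longleftrightarrow>
      (\<forall>K U. compact K \<and> K \<subseteq> {0..1} \<and> openin X U \<longrightarrow> openin T {x \<in> topspace T. h x ` K \<subseteq> U})"
    if "h \<in> topspace T \<rightarrow> paths_of X"
  proof -
    have eq: "h -` {f \<in> paths_of X. f ` K \<subseteq> U} \<inter> topspace T = {x \<in> topspace T. h x ` K \<subseteq> U}" for K U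
      using that by auto
    have "(\<forall>V\<in>?S. openin T (h -` V \<inter> topspace T)) \<longleftrightarrow>
      (\<forall>K U. compactin unit_interval_top K \<and> openin X U \<longrightarrow>
         openin T (h -` {f \<in> paths_of X. f ` K \<subseteq> U} \<inter> topspace T))"
      by blast
    then show ?thesis
      by (simp only: eq compactin_subtopology compactin_euclidean_iff conj_assoc)
  qed
  ultimately show ?thesis
    unfolding path_space_def continuous_on_generated_topo_iff
    by (auto simp: Pi_iff image_subset_iff)
qed

lemma restrict_in_paths_of: "pathin X g \<Longrightarrow> restrict g {0..1} \<in> paths_of X"
  unfolding paths_of_def pathin_def by (auto intro: continuous_map_eq)

lemma continuous_map_path_space_curry:
  assumes H: "continuous_map (prod_topology unit_interval_top T) X H"
  shows "continuous_map T (path_space X) (\<lambda>x. restrict (\<lambda>t. H (t, x)) {0..1})"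
  unfolding continuous_map_path_space
proof (intro conjI allI impI Pi_I)
  fix x assume x: "x \<in> topspace T"
  then have "continuous_map unit_interval_top (prod_topology unit_interval_top T) (\<lambda>t. (t, x))"
    by (intro continuous_intros) auto
  then have "pathin X (\<lambda>t. H (t, x))"
    unfolding pathin_def using continuous_map_compose[OF _ H] by (simp add: o_def)
  then show "restrict (\<lambda>t. H (t, x)) {0..1} \<in> paths_of X"
    by (rule restrict_in_paths_of)
next
  fix K :: "real set" and U assume KU: "compact K \<and> K \<subseteq> {0..1} \<and> openin X U"
  let ?N = "{x \<in> topspace T. restrict (\<lambda>t. H (t, x)) {0..1} ` K \<subseteq> U}"
  let ?W = "{z \<in> topspace (prod_topology unit_interval_top T). H z \<in> U}"
  have W: "openin (prod_topology unit_interval_top T) ?W"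
    using openin_continuous_map_preimage[OF H] KU by blast
  have K: "compactin unit_interval_top K"
    using KU by (simp add: compactin_subtopology)
  define N where "N = {x \<in> topspace T. \<forall>t\<in>K. H (t, x) \<in> U}"
  have "openin T N"
  proof (subst openin_subopen, intro ballI)
    fix x assume "x \<in> N"
    then have x: "x \<in> topspace T" and sub: "K \<times> {x} \<subseteq> ?W"
      using KU by (auto simp: N_def)
    obtain V V' where V: "openin unit_interval_top V" "openin T V'" "K \<subseteq> V" "x \<in> V'" "V \<times> V' \<subseteq> ?W"
      using tube_lemma_left[OF W K x sub] by blast
    have "V' \<subseteq> N"
    proof
      fix y assume "y \<in> V'"
      then show "y \<in> N"
        using V(3,5) openin_subset[OF V(2)] unfolding N_def by fastforce
    qed
    with V show "\<exists>V'. openin T V' \<and> x \<in> V' \<and> V' \<subseteq> N"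
      by blast
  qed
  moreover have "?N = N"
    using KU unfolding N_def by (force simp: image_subset_iff)
  ultimately show "openin T ?N"
    by simp
qed

lemma continuous_map_path_space_uncurry:
  assumes h: "continuous_map T (path_space X) h"
  shows "continuous_map (prod_topology unit_interval_top T) X (\<lambda>(t, x). h x t)"
proof -
  have paths: "pathin X (h x)" if "x \<in> topspace T" for x
    using h that unfolding continuous_map_path_space paths_of_def pathin_def by blast
  have tubes: "openin T {x \<in> topspace T. h x ` K \<subseteq> U}"
    if "compact K" "K \<subseteq> {0..1}" "openin X U" for K U
    using h that unfolding continuous_map_path_space by blast
  show ?thesis
    unfolding continuous_map_def
  proof (intro conjI allI impI)
    show "(\<lambda>(t, x). h x t) \<in> topspace (prod_topology unit_interval_top T) \<rightarrow> topspace X"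
      using paths path_image_subset_topspace by fastforce
  next
    fix U assume U: "openin X U"
    let ?W = "{z \<in> topspace (prod_topology unit_interval_top T). (\<lambda>(t, x). h x t) z \<in> U}"
    show "openin (prod_topology unit_interval_top T) ?W"
    proof (subst openin_subopen, intro ballI)
      fix z assume "z \<in> ?W"
      then obtain t0 x0 where z: "z = (t0, x0)" and t0: "t0 \<in> {0..1}" and x0: "x0 \<in> topspace T"
        and "h x0 t0 \<in> U"
        by auto
      then have "openin unit_interval_top {t \<in> {0..1}. h x0 t \<in> U}"
        using openin_continuous_map_preimage[OF paths[unfolded pathin_def] U] by simp
      with t0 \<open>h x0 t0 \<in> U\<close> obtain e where e: "e > 0" "ball t0 e \<inter> {0..1} \<subseteq> {t \<in> {0..1}. h x0 t \<in> U}"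
        unfolding openin_contains_ball by blast
      define K where "K = cball t0 (e/2) \<inter> {0..1}"
      have K: "compact K" "K \<subseteq> {0..1}"
        by (auto simp: K_def compact_Int_closed)
      have "K \<subseteq> ball t0 e \<inter> {0..1}"
        using e(1) by (auto simp: K_def)
      with e(2) x0 have x0N: "x0 \<in> {x \<in> topspace T. h x ` K \<subseteq> U}"
        by blast
      define V where "V = {0..1} \<inter> ball t0 (e/2)"
      have "openin (prod_topology unit_interval_top T) (V \<times> {x \<in> topspace T. h x ` K \<subseteq> U})"
        using tubes[OF K U] by (simp add: openin_prod_Times_iff V_def openin_open_Int)
      moreover have "V \<times> {x \<in> topspace T. h x ` K \<subseteq> U} \<subseteq> ?W"
        by (auto simp: V_def K_def)
      moreover have "z \<in> V \<times> {x \<in> topspace T. h x ` K \<subseteq> U}"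
        using z t0 x0N e(1) by (simp add: V_def)
      ultimately show "\<exists>N. openin (prod_topology unit_interval_top T) N \<and> z \<in> N \<and> N \<subseteq> ?W"
        by blast
    qed
  qed
qed

lemma has_local_section_iff_homotopic_projections:
  assumes A: "A \<subseteq> topspace X \<times> topspace X"
  shows "has_local_section X A \<longleftrightarrow> homotopic_with (\<lambda>_. True) (subtopology (prod_topology X X) A) X fst snd"
proof -
  let ?Z = "subtopology (prod_topology X X) A"
  have topspace_Z: "topspace ?Z = A"
    using A by auto
  show ?thesis
    unfolding homotopic_with[where P="\<lambda>_. True", simplified] topspace_Z
  proof
    assume "has_local_section X A"
    then obtain s where s: "continuous_map ?Z (path_space X) s" and ends: "\<forall>a\<in>A. endpoints (s a) = a"
      unfolding has_local_section_def by blast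
    show "\<exists>h. continuous_map (prod_topology unit_interval_top ?Z) X h \<and>
        (\<forall>a\<in>A. h (0, a) = fst a) \<and> (\<forall>a\<in>A. h (1, a) = snd a)"
    proof (intro exI conjI)
      show "continuous_map (prod_topology unit_interval_top ?Z) X (\<lambda>(t, a). s a t)"
        using s by (rule continuous_map_path_space_uncurry)
    qed (use ends in \<open>auto simp: endpoints_def\<close>)
  next
    assume "\<exists>h. continuous_map (prod_topology unit_interval_top ?Z) X h \<and>
        (\<forall>a\<in>A. h (0, a) = fst a) \<and> (\<forall>a\<in>A. h (1, a) = snd a)"
    then obtain h where h: "continuous_map (prod_topology unit_interval_top ?Z) X h"
      and h01: "\<forall>a\<in>A. h (0, a) = fst a" "\<forall>a\<in>A. h (1, a) = snd a"
      by blast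
    show "has_local_section X A"
      unfolding has_local_section_def
      using continuous_map_path_space_curry[OF h] h01 by (auto simp: endpoints_def)
  qed
qed

lemma has_local_section_pullback:
  assumes f: "continuous_map X Y f" and g: "continuous_map Y X g"
    and fg: "homotopic_with (\<lambda>_. True) Y Y (f \<circ> g) id"
    and A: "A \<subseteq> topspace X \<times> topspace X" and sec: "has_local_section X A"
  shows "has_local_section Y {z \<in> topspace Y \<times> topspace Y. map_prod g g z \<in> A}"
    (is "has_local_section Y ?B")
proof -
  let ?Z = "subtopology (prod_topology Y Y) ?B"
  have gg: "continuous_map ?Z (subtopology (prod_topology X X) A) (map_prod g g)"
  proof -
    have "continuous_map (prod_topology Y Y) (prod_topology X X) (map_prod g g)"
      using continuous_map_prod_top[of Y Y X X g g] g by (simp add: map_prod_def)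
    then show ?thesis
      by (auto simp: continuous_map_in_subtopology continuous_map_from_subtopology)
  qed
  have fst_Z: "continuous_map ?Z Y fst" and snd_Z: "continuous_map ?Z Y snd"
    by (simp_all add: continuous_map_from_subtopology continuous_map_fst continuous_map_snd)
  have "homotopic_with (\<lambda>_. True) (subtopology (prod_topology X X) A) X fst snd"
    using sec A has_local_section_iff_homotopic_projections by blast
  then have "homotopic_with (\<lambda>_. True) ?Z X (fst \<circ> map_prod g g) (snd \<circ> map_prod g g)"
    using gg by (rule homotopic_with_compose_continuous_map_right) simp
  then have "homotopic_with (\<lambda>_. True) ?Z Y (f \<circ> (fst \<circ> map_prod g g)) (f \<circ> (snd \<circ> map_prod g g))"
    using f by (rule homotopic_with_compose_continuous_map_left) simp
  then have middle: "homotopic_with (\<lambda>_. True) ?Z Y ((f \<circ> g) \<circ> fst) ((f \<circ> g) \<circ> snd)"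
    by (simp add: comp_assoc fst_comp_map_prod snd_comp_map_prod)
  have "homotopic_with (\<lambda>_. True) ?Z Y ((f \<circ> g) \<circ> fst) (id \<circ> fst)"
    using fg fst_Z by (rule homotopic_with_compose_continuous_map_right) simp
  then have left: "homotopic_with (\<lambda>_. True) ?Z Y fst ((f \<circ> g) \<circ> fst)"
    by (simp add: homotopic_with_sym)
  have right: "homotopic_with (\<lambda>_. True) ?Z Y ((f \<circ> g) \<circ> snd) snd"
    using homotopic_with_compose_continuous_map_right[OF fg snd_Z] by simp
  have "homotopic_with (\<lambda>_. True) ?Z Y fst snd"
    using homotopic_with_trans[OF left homotopic_with_trans[OF middle right]] .
  moreover have "?B \<subseteq> topspace Y \<times> topspace Y"
    by blast
  ultimately show ?thesis
    using has_local_section_iff_homotopic_projections by blast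
qed

lemma tcg_cover_dominated:
  assumes f: "continuous_map X Y f" and g: "continuous_map Y X g"
    and fg: "homotopic_with (\<lambda>_. True) Y Y (f \<circ> g) id"
    and cover: "tcg_cover X n"
  shows "tcg_cover Y n"
proof -
  obtain A where A: "(\<Union>i\<le>n. A i) = topspace X \<times> topspace X"
    and sec: "\<And>i. i \<le> n \<Longrightarrow> has_local_section X (A i)"
    using cover unfolding tcg_cover_def by blast
  define B where "B i = {z \<in> topspace Y \<times> topspace Y. map_prod g g z \<in> A i}" for i
  have "map_prod g g z \<in> (\<Union>i\<le>n. A i)" if "z \<in> topspace Y \<times> topspace Y" for z
    using that continuous_map_image_subset_topspace[OF g] A by (auto simp: map_prod_def split: prod.splits)
  then have "(\<Union>i\<le>n. B i) = topspace Y \<times> topspace Y"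
    unfolding B_def by auto
  moreover have "has_local_section Y (B i)" if "i \<le> n" for i
  proof -
    have "A i \<subseteq> topspace X \<times> topspace X"
      using A that by blast
    then show ?thesis
      unfolding B_def using has_local_section_pullback[OF f g fg _ sec[OF that]] by blast
  qed
  ultimately show ?thesis
    unfolding tcg_cover_def by blast
qed

lemma TC_g_dominated_le:
  assumes f: "continuous_map X Y f" and g: "continuous_map Y X g"
    and fg: "homotopic_with (\<lambda>_. True) Y Y (f \<circ> g) id"
  shows "TC_g Y \<le> TC_g X"
proof (cases "\<exists>n. tcg_cover X n")
  case True
  then have "tcg_cover X (LEAST n. tcg_cover X n)"
    by (rule LeastI_ex)
  then have "tcg_cover Y (LEAST n. tcg_cover X n)"
    using tcg_cover_dominated[OF f g fg] by blast
  then show ?thesis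
    unfolding TC_g_def using True by (auto intro: Least_le)
next
  case False
  then show ?thesis
    by (simp add: TC_g_def)
qed

theorem mainTheorem3:
  fixes X :: "'a topology" and X' :: "'b topology"
  assumes "X homotopy_equivalent_space X'"
  shows "TC_g X = TC_g X'"
proof -
  obtain f g where f: "continuous_map X X' f" and g: "continuous_map X' X g"
    and gf: "homotopic_with (\<lambda>x. True) X X (g \<circ> f) id"
    and fg: "homotopic_with (\<lambda>x. True) X' X' (f \<circ> g) id"
    using assms unfolding homotopy_equivalent_space_def by blast
  show ?thesis
    using TC_g_dominated_le[OF f g fg] TC_g_dominated_le[OF g f gf] by (rule antisym[rotated])
qed

end
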